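(* Let $X$ be a Banach space (real or complex) and let $x\in X$ be non-zero. If $x$ is a right symmetric point of $X$ and $x$ is smooth, then $x$ is a left symmetric point of $X$.
   Context: In a normed space $X$ over $\mathbb{K}$, $x\perp_{BJ}y$ means $\|x+\lambda y\|\ge\|x\|$ for all $\lambda\in\mathbb{K}$; $x$ is a left symmetric point if $x\perp_{BJ}y$ implies $y\perp_{BJ}x$ for all $y\in X$, and a right symmetric point if $y\perp_{BJ}x$ implies $x\perp_{BJ}y$ for all $y\in X$. A non-zero $x$ is smooth if there is a unique norm-one $F\in X^*$ with $F(x)=\|x\|$. *)

theory Defs
  imports "HOL-Analysis.Analysis"
begin

text \<open>A normed space over a scalar field K is modelled as a type with a norm together
 with a scalar multiplication sm :: K => X => X.  For K = real we use scaleR;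
 a complex normed space is a real normed space together with a complex scalar
 multiplication extending scaleR and compatible with the norm.\<close>

definition complex_scaling :: "(complex \<Rightarrow> 'a::real_normed_vector \<Rightarrow> 'a) \<Rightarrow> bool" where
  "complex_scaling cs \<longleftrightarrow>
     (\<forall>r x. cs (complex_of_real r) x = r *\<^sub>R x) \<and>
     (\<forall>a b x. cs (a + b) x = cs a x + cs b x) \<and>
     (\<forall>a x y. cs a (x + y) = cs a x + cs a y) \<and>
     (\<forall>a b x. cs (a * b) x = cs a (cs b x)) \<and>
     (\<forall>a x. norm (cs a x) = cmod a * norm x)"

definition BJ_orth :: "('k \<Rightarrow> 'a \<Rightarrow> 'a) \<Rightarrow> 'a::real_normed_vector \<Rightarrow> 'a \<Rightarrow> bool" where
  "BJ_orth sm x y \<longleftrightarrow> (\<forall>c. norm (x + sm c y) \<ge> norm x)"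

definition left_symmetric :: "('k \<Rightarrow> 'a \<Rightarrow> 'a) \<Rightarrow> 'a::real_normed_vector \<Rightarrow> bool" where
  "left_symmetric sm x \<longleftrightarrow> (\<forall>y. BJ_orth sm x y \<longrightarrow> BJ_orth sm y x)"

definition right_symmetric :: "('k \<Rightarrow> 'a \<Rightarrow> 'a) \<Rightarrow> 'a::real_normed_vector \<Rightarrow> bool" where
  "right_symmetric sm x \<longleftrightarrow> (\<forall>y. BJ_orth sm y x \<longrightarrow> BJ_orth sm x y)"

definition dual_functional :: "('k::real_normed_field \<Rightarrow> 'a \<Rightarrow> 'a) \<Rightarrow> ('a::real_normed_vector \<Rightarrow> 'k) \<Rightarrow> bool" where
  "dual_functional sm F \<longleftrightarrow> bounded_linear F \<and> (\<forall>c v. F (sm c v) = c * F v)"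

definition smooth_point :: "('k::real_normed_field \<Rightarrow> 'a \<Rightarrow> 'a) \<Rightarrow> 'a::real_normed_vector \<Rightarrow> bool" where
  "smooth_point sm x \<longleftrightarrow> x \<noteq> 0 \<and>
     (\<exists>!F. dual_functional sm F \<and> onorm F = 1 \<and> F x = of_real (norm x))"

end

theory Submission
  imports Defs
begin

text \<open>Let x be smooth and right symmetric, and let x be orthogonal to y. Minimising
  norm (y + a x) over the scalars a gives w = y + a x with w orthogonal to x, so x is
  orthogonal to w by right symmetry. By the Hahn--Banach theorem, each of the relations
  x orthogonal to y and x orthogonal to w yields a norming functional of x vanishing at
  y, resp. at w; by smoothness both are the same functional F. Hence
  0 = F w = F y + a norm x = a norm x, so a = 0, w = y and y is orthogonal to x.
  In the complex case the real functional g obtained from Hahn--Banach is turned into the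
  complex functional v \<mapsto> g v - i g (i v).\<close>

section \<open>The Hahn--Banach dominated extension theorem\<close>

definition sublinear :: "('a::real_vector \<Rightarrow> real) \<Rightarrow> bool" where
  "sublinear p \<longleftrightarrow>
     (\<forall>u v. p (u + v) \<le> p u + p v) \<and> (\<forall>r u. 0 \<le> r \<longrightarrow> p (r *\<^sub>R u) = r * p u)"

lemma
  assumes "sublinear p"
  shows sublinear_add: "p (u + v) \<le> p u + p v"
    and sublinear_scale: "0 \<le> r \<Longrightarrow> p (r *\<^sub>R u) = r * p u"
  using assms unfolding sublinear_def by blast+

lemma sublinear_norm: "sublinear (norm :: 'a::real_normed_vector \<Rightarrow> real)"
  by (simp add: sublinear_def norm_triangle_ineq)

text \<open>Partial linear functionals are represented by their graphs, so that Zorn's lemma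
  can be applied to the inclusion order.\<close>

definition dominated_linear_graph :: "('a::real_vector \<Rightarrow> real) \<Rightarrow> ('a \<times> real) set \<Rightarrow> bool" where
  "dominated_linear_graph p M \<longleftrightarrow>
     (0, 0) \<in> M \<and>
     (\<forall>u a b. (u, a) \<in> M \<longrightarrow> (u, b) \<in> M \<longrightarrow> a = b) \<and>
     (\<forall>u a v b. (u, a) \<in> M \<longrightarrow> (v, b) \<in> M \<longrightarrow> (u + v, a + b) \<in> M) \<and>
     (\<forall>u a r. (u, a) \<in> M \<longrightarrow> (r *\<^sub>R u, r * a) \<in> M) \<and>
     (\<forall>u a. (u, a) \<in> M \<longrightarrow> a \<le> p u)"

lemma
  assumes "dominated_linear_graph p M"
  shows dominated_linear_graph_zero: "(0, 0) \<in> M"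
    and dominated_linear_graph_unique: "(u, a) \<in> M \<Longrightarrow> (u, b) \<in> M \<Longrightarrow> a = b"
    and dominated_linear_graph_add: "(u, a) \<in> M \<Longrightarrow> (v, b) \<in> M \<Longrightarrow> (u + v, a + b) \<in> M"
    and dominated_linear_graph_scale: "(u, a) \<in> M \<Longrightarrow> (r *\<^sub>R u, r * a) \<in> M"
    and dominated_linear_graph_le: "(u, a) \<in> M \<Longrightarrow> a \<le> p u"
  using assms unfolding dominated_linear_graph_def by blast+

text \<open>Any c in the gap below is an admissible value at z for extending M by one dimension.\<close>

lemma dominated_linear_graph_gap:
  assumes p: "sublinear p" and M: "dominated_linear_graph p M"
  obtains c where "\<And>u a. (u, a) \<in> M \<Longrightarrow> a - p (u - z) \<le> c"
    and "\<And>v b. (v, b) \<in> M \<Longrightarrow> c \<le> p (v + z) - b"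
proof -
  have sep: "a - p (u - z) \<le> p (v + z) - b" if "(u, a) \<in> M" "(v, b) \<in> M" for u a v b
  proof -
    have "a + b \<le> p (u + v)"
      using that dominated_linear_graph_add[OF M] dominated_linear_graph_le[OF M] by blast
    also have "u + v = (u - z) + (v + z)" by simp
    also have "p \<dots> \<le> p (u - z) + p (v + z)" by (rule sublinear_add[OF p])
    finally show ?thesis by simp
  qed
  define S where "S = (\<lambda>(u, a). a - p (u - z)) ` M"
  have "S \<noteq> {}" using dominated_linear_graph_zero[OF M] unfolding S_def by blast
  moreover have "bdd_above S"
    using sep[OF _ dominated_linear_graph_zero[OF M]] unfolding S_def by (auto intro!: bdd_aboveI)
  ultimately show ?thesis
    using sep by (intro that[of "Sup S"]) (auto simp: S_def intro!: cSup_upper cSup_least)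
qed

lemma dominated_linear_graph_adjoin_le:
  assumes p: "sublinear p" and M: "dominated_linear_graph p M" and uM: "(u, a) \<in> M"
    and below: "\<And>u a. (u, a) \<in> M \<Longrightarrow> a - p (u - z) \<le> c"
    and above: "\<And>v b. (v, b) \<in> M \<Longrightarrow> c \<le> p (v + z) - b"
  shows "a + t * c \<le> p (u + t *\<^sub>R z)"
proof -
  consider "t = 0" | "t > 0" | "t < 0" by linarith
  then show ?thesis
  proof cases
    case 1
    then show ?thesis using dominated_linear_graph_le[OF M uM] by simp
  next
    case 2
    have "t * c \<le> t * (p ((1 / t) *\<^sub>R u + z) - (1 / t) * a)"
      using 2 above[OF dominated_linear_graph_scale[OF M uM, where r = "1 / t"]]
      by (simp add: mult_left_mono)
    also have "\<dots> = p (t *\<^sub>R ((1 / t) *\<^sub>R u + z)) - a"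
      using 2 by (simp add: sublinear_scale[OF p] right_diff_distrib)
    also have "t *\<^sub>R ((1 / t) *\<^sub>R u + z) = u + t *\<^sub>R z"
      using 2 by (simp add: scaleR_add_right)
    finally show ?thesis by simp
  next
    case 3
    define s where "s = - t"
    have s: "0 < s" using 3 by (simp add: s_def)
    have "a - p (s *\<^sub>R ((1 / s) *\<^sub>R u - z)) = s * ((1 / s) * a - p ((1 / s) *\<^sub>R u - z))"
      using s by (simp add: sublinear_scale[OF p] right_diff_distrib)
    also have "\<dots> \<le> s * c"
      using s below[OF dominated_linear_graph_scale[OF M uM, where r = "1 / s"]]
      by (simp add: mult_left_mono)
    also have "s *\<^sub>R ((1 / s) *\<^sub>R u - z) = u + t *\<^sub>R z"
      using s by (simp add: s_def scaleR_diff_right)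
    finally show ?thesis by (simp add: s_def)
  qed
qed

lemma dominated_linear_graph_adjoin_coeff_eq:
  assumes M: "dominated_linear_graph p M" and z: "z \<notin> fst ` M"
    and "(u, a) \<in> M" "(v, b) \<in> M" and eq: "u + t *\<^sub>R z = v + s *\<^sub>R z"
  shows "t = s"
proof (rule ccontr)
  assume "t \<noteq> s"
  have "(u + (-1) *\<^sub>R v, a + (-1) * b) \<in> M"
    using assms(3,4) by (intro dominated_linear_graph_add[OF M] dominated_linear_graph_scale[OF M])
  from dominated_linear_graph_scale[OF M this, where r = "1 / (s - t)"]
  have "((1 / (s - t)) *\<^sub>R (u - v), (1 / (s - t)) * (a - b)) \<in> M"
    by (simp add: algebra_simps)
  moreover have "u - v = (s - t) *\<^sub>R z"
    using eq by (simp add: algebra_simps)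
  ultimately have "(z, (1 / (s - t)) * (a - b)) \<in> M"
    using \<open>t \<noteq> s\<close> by simp
  then have "z \<in> fst ` M"
    by (rule image_eqI[rotated]) simp
  with z show False ..
qed

lemma dominated_linear_graph_adjoin:
  assumes p: "sublinear p" and M: "dominated_linear_graph p M" and z: "z \<notin> fst ` M"
    and below: "\<And>u a. (u, a) \<in> M \<Longrightarrow> a - p (u - z) \<le> c"
    and above: "\<And>v b. (v, b) \<in> M \<Longrightarrow> c \<le> p (v + z) - b"
  shows "dominated_linear_graph p {(u + t *\<^sub>R z, a + t * c) | u a t. (u, a) \<in> M}"
    (is "dominated_linear_graph p ?M'")
  unfolding dominated_linear_graph_def
proof (intro conjI allI impI)
  have "(0 + 0 *\<^sub>R z, 0 + 0 * c) \<in> ?M'"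
    using dominated_linear_graph_zero[OF M] by blast
  then show "(0, 0) \<in> ?M'"
    by (simp only: add_0 scaleR_zero_left mult_zero_left)
next
  fix w a b assume "(w, a) \<in> ?M'" "(w, b) \<in> ?M'"
  then obtain u a' t v b' s
    where A: "w = u + t *\<^sub>R z" "a = a' + t * c" "(u, a') \<in> M"
      and B: "w = v + s *\<^sub>R z" "b = b' + s * c" "(v, b') \<in> M"
    by blast
  have "t = s"
    using dominated_linear_graph_adjoin_coeff_eq[OF M z A(3) B(3)] A(1) B(1) by simp
  then have "a' = b'"
    using A B dominated_linear_graph_unique[OF M] by auto
  then show "a = b" using A B \<open>t = s\<close> by simp
next
  fix w a w' b assume "(w, a) \<in> ?M'" "(w', b) \<in> ?M'"
  then obtain u a' t v b' s
    where A: "w = u + t *\<^sub>R z" "a = a' + t * c" "(u, a') \<in> M"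
      and B: "w' = v + s *\<^sub>R z" "b = b' + s * c" "(v, b') \<in> M"
    by blast
  have "(u + v, a' + b') \<in> M" using dominated_linear_graph_add[OF M A(3) B(3)] .
  moreover have "w + w' = (u + v) + (t + s) *\<^sub>R z" "a + b = (a' + b') + (t + s) * c"
    using A B by (simp_all add: algebra_simps)
  ultimately show "(w + w', a + b) \<in> ?M'" by blast
next
  fix w a r assume "(w, a) \<in> ?M'"
  then obtain u a' t where A: "w = u + t *\<^sub>R z" "a = a' + t * c" "(u, a') \<in> M"
    by blast
  have "(r *\<^sub>R u, r * a') \<in> M" using dominated_linear_graph_scale[OF M A(3)] .
  moreover have "r *\<^sub>R w = r *\<^sub>R u + (r * t) *\<^sub>R z" "r * a = r * a' + (r * t) * c"
    using A by (simp_all add: algebra_simps)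
  ultimately show "(r *\<^sub>R w, r * a) \<in> ?M'" by blast
next
  fix w a assume "(w, a) \<in> ?M'"
  then show "a \<le> p w"
    using dominated_linear_graph_adjoin_le[OF p M _ below above] by blast
qed

lemma dominated_linear_graph_Union_chain:
  assumes "C \<noteq> {}" and graphs: "\<And>M. M \<in> C \<Longrightarrow> dominated_linear_graph p M"
    and chain: "\<And>A B. A \<in> C \<Longrightarrow> B \<in> C \<Longrightarrow> A \<subseteq> B \<or> B \<subseteq> A"
  shows "dominated_linear_graph p (\<Union>C)"
proof -
  have common: "\<exists>M\<in>C. q \<in> M \<and> q' \<in> M" if "q \<in> \<Union>C" "q' \<in> \<Union>C" for q q'
    using that chain by blast
  show ?thesis
    unfolding dominated_linear_graph_def
  proof (intro conjI allI impI)
    show "(0, 0) \<in> \<Union>C"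
      using \<open>C \<noteq> {}\<close> graphs dominated_linear_graph_zero by blast
  next
    fix u a b assume "(u, a) \<in> \<Union>C" "(u, b) \<in> \<Union>C"
    then obtain M where "M \<in> C" "(u, a) \<in> M" "(u, b) \<in> M"
      using common by blast
    then show "a = b"
      using graphs dominated_linear_graph_unique by blast
  next
    fix u a v b assume "(u, a) \<in> \<Union>C" "(v, b) \<in> \<Union>C"
    then obtain M where "M \<in> C" "(u, a) \<in> M" "(v, b) \<in> M"
      using common by blast
    then show "(u + v, a + b) \<in> \<Union>C"
      using graphs dominated_linear_graph_add by blast
  next
    fix u a r assume "(u, a) \<in> \<Union>C"
    then show "(r *\<^sub>R u, r * a) \<in> \<Union>C"
      using graphs dominated_linear_graph_scale by blast
  next
    fix u a assume "(u, a) \<in> \<Union>C"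
    then show "a \<le> p u"
      using graphs dominated_linear_graph_le by blast
  qed
qed

lemma dominated_linear_graph_total_imp_linear:
  assumes M: "dominated_linear_graph p M" and total: "fst ` M = UNIV"
  obtains g where "linear g" "\<And>v. g v \<le> p v" "\<And>u a. (u, a) \<in> M \<Longrightarrow> g u = a"
proof -
  define g where "g v = (THE a. (v, a) \<in> M)" for v
  have graph: "(v, g v) \<in> M" for v
  proof -
    have "v \<in> fst ` M" using total by simp
    then obtain a where a: "(v, a) \<in> M" by force
    show ?thesis
      unfolding g_def by (rule theI[where P = "\<lambda>b. (v, b) \<in> M", OF a]) (rule dominated_linear_graph_unique[OF M _ a])
  qed
  have eq: "g u = a" if "(u, a) \<in> M" for u a
    using dominated_linear_graph_unique[OF M graph that] .
  have "linear g"
  proof (rule linearI)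
    show "g (u + v) = g u + g v" for u v
      by (rule eq[OF dominated_linear_graph_add[OF M graph graph]])
    show "g (r *\<^sub>R u) = r *\<^sub>R g u" for r u
      using eq[OF dominated_linear_graph_scale[OF M graph]] by simp
  qed
  then show thesis
    using that dominated_linear_graph_le[OF M graph] eq by blast
qed

lemma dominated_linear_graph_maximal_total:
  assumes p: "sublinear p" and M: "dominated_linear_graph p M"
    and maximal: "\<And>M'. dominated_linear_graph p M' \<Longrightarrow> M \<subseteq> M' \<Longrightarrow> M' = M"
  shows "fst ` M = UNIV"
proof (rule ccontr)
  assume "fst ` M \<noteq> UNIV"
  then obtain z where z: "z \<notin> fst ` M" by blast
  obtain c where below: "\<And>u a. (u, a) \<in> M \<Longrightarrow> a - p (u - z) \<le> c"
    and above: "\<And>v b. (v, b) \<in> M \<Longrightarrow> c \<le> p (v + z) - b"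
    by (rule dominated_linear_graph_gap[OF p M, where z = z]) (rule that)
  let ?M' = "{(u + t *\<^sub>R z, a + t * c) | u a t. (u, a) \<in> M}"
  have "?M' = M"
  proof (rule maximal)
    show "dominated_linear_graph p ?M'"
      by (rule dominated_linear_graph_adjoin[OF p M z below above])
    show "M \<subseteq> ?M'"
    proof (rule subrelI)
      fix u a assume "(u, a) \<in> M"
      then have "(u + 0 *\<^sub>R z, a + 0 * c) \<in> ?M'" by blast
      then show "(u, a) \<in> ?M'"
        by (simp only: add_0_right scaleR_zero_left mult_zero_left)
    qed
  qed
  moreover have "(z, c) \<in> ?M'"
  proof -
    have "(0 + 1 *\<^sub>R z, 0 + 1 * c) \<in> ?M'"
      using dominated_linear_graph_zero[OF M] by blast
    then show ?thesis
      by (simp only: add_0 scaleR_one mult_1)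
  qed
  ultimately show False
    using z by force
qed

theorem Hahn_Banach_dominated_extension:
  assumes p: "sublinear p" and M0: "dominated_linear_graph p M0"
  obtains g where "linear g" "\<And>v. g v \<le> p v" "\<And>u a. (u, a) \<in> M0 \<Longrightarrow> g u = a"
proof -
  let ?E = "{M. dominated_linear_graph p M \<and> M0 \<subseteq> M}"
  have "\<exists>M\<in>?E. \<forall>M'\<in>?E. M \<subseteq> M' \<longrightarrow> M' = M"
  proof (rule subset_Zorn_nonempty)
    show "?E \<noteq> {}" using M0 by blast
  next
    fix C assume C: "C \<noteq> {}" "subset.chain ?E C"
    then have "C \<subseteq> ?E" and "\<And>A B. A \<in> C \<Longrightarrow> B \<in> C \<Longrightarrow> A \<subseteq> B \<or> B \<subseteq> A"
      unfolding subset_chain_def by blast+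
    then have "dominated_linear_graph p (\<Union>C)"
      by (intro dominated_linear_graph_Union_chain[OF C(1)]) auto
    moreover have "M0 \<subseteq> \<Union>C"
      using C(1) \<open>C \<subseteq> ?E\<close> by blast
    ultimately show "\<Union>C \<in> ?E" by blast
  qed
  then obtain M where "M \<in> ?E" and "\<forall>M'\<in>?E. M \<subseteq> M' \<longrightarrow> M' = M"
    by (elim bexE)
  then have M: "dominated_linear_graph p M" "M0 \<subseteq> M"
    and maximal: "\<And>M'. dominated_linear_graph p M' \<Longrightarrow> M \<subseteq> M' \<Longrightarrow> M' = M"
    by auto
  have "fst ` M = UNIV"
    by (rule dominated_linear_graph_maximal_total[OF p M(1)]) (rule maximal)
  then obtain g where "linear g" "\<And>v. g v \<le> p v" "\<And>u a. (u, a) \<in> M \<Longrightarrow> g u = a"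
    by (rule dominated_linear_graph_total_imp_linear[OF M(1)]) (rule that)
  then show thesis
    using that M(2) by blast
qed

section \<open>Norming functionals of Birkhoff--James orthogonal vectors\<close>

lemma orth_subspace_abs_scaleR_le:
  fixes x :: "'a::real_normed_vector"
  assumes Y: "subspace Y" and orth: "\<forall>u\<in>Y. norm x \<le> norm (x + u)" and u: "u \<in> Y"
  shows "\<bar>r\<bar> * norm x \<le> norm (r *\<^sub>R x + u)"
proof (cases "r = 0")
  case True
  then show ?thesis by simp
next
  case False
  have "(1 / r) *\<^sub>R u \<in> Y"
    using Y u by (simp add: subspace_scale)
  then have "norm x \<le> norm (x + (1 / r) *\<^sub>R u)"
    using orth by blast
  moreover have "r *\<^sub>R x + u = r *\<^sub>R (x + (1 / r) *\<^sub>R u)"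
    using False by (simp add: scaleR_add_right)
  ultimately show ?thesis
    by (simp add: mult_left_mono)
qed

lemma dominated_linear_graph_orth_subspace:
  fixes x :: "'a::real_normed_vector"
  assumes Y: "subspace Y" and orth: "\<forall>u\<in>Y. norm x \<le> norm (x + u)"
  shows "dominated_linear_graph norm {(r *\<^sub>R x + u, r * norm x) | r u. u \<in> Y}"
    (is "dominated_linear_graph norm ?M")
  unfolding dominated_linear_graph_def
proof (intro conjI allI impI)
  have "(0 *\<^sub>R x + 0, 0 * norm x) \<in> ?M"
    using subspace_0[OF Y] by blast
  then show "(0, 0) \<in> ?M"
    by (simp only: scaleR_zero_left add_0 mult_zero_left)
next
  fix w a b assume "(w, a) \<in> ?M" "(w, b) \<in> ?M"
  then obtain r u s v where A: "w = r *\<^sub>R x + u" "a = r * norm x" "u \<in> Y"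
    and B: "w = s *\<^sub>R x + v" "b = s * norm x" "v \<in> Y"
    by blast
  have "\<bar>r - s\<bar> * norm x \<le> norm ((r - s) *\<^sub>R x + (u - v))"
    by (rule orth_subspace_abs_scaleR_le[OF Y orth subspace_diff[OF Y A(3) B(3)]])
  also have "(r - s) *\<^sub>R x + (u - v) = 0"
    using A(1) B(1) by (simp add: algebra_simps)
  finally have "\<bar>r - s\<bar> * norm x \<le> 0"
    by simp
  then show "a = b"
    using A(2) B(2) by (auto simp: mult_le_0_iff)
next
  fix w a w' b assume "(w, a) \<in> ?M" "(w', b) \<in> ?M"
  then obtain r u s v where A: "w = r *\<^sub>R x + u" "a = r * norm x" "u \<in> Y"
    and B: "w' = s *\<^sub>R x + v" "b = s * norm x" "v \<in> Y"
    by blast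
  have "w + w' = (r + s) *\<^sub>R x + (u + v)" "a + b = (r + s) * norm x"
    using A B by (simp_all add: algebra_simps)
  then show "(w + w', a + b) \<in> ?M"
    using subspace_add[OF Y A(3) B(3)] by blast
next
  fix w a t assume "(w, a) \<in> ?M"
  then obtain r u where A: "w = r *\<^sub>R x + u" "a = r * norm x" "u \<in> Y"
    by blast
  have "t *\<^sub>R w = (t * r) *\<^sub>R x + t *\<^sub>R u" "t * a = (t * r) * norm x"
    using A by (simp_all add: algebra_simps)
  then show "(t *\<^sub>R w, t * a) \<in> ?M"
    using subspace_scale[OF Y A(3)] by blast
next
  fix w a assume "(w, a) \<in> ?M"
  then obtain r u where A: "w = r *\<^sub>R x + u" "a = r * norm x" "u \<in> Y"
    by blast
  have "a \<le> \<bar>r\<bar> * norm x"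
    using A(2) by (simp add: mult_right_mono)
  also have "\<dots> \<le> norm w"
    using orth_subspace_abs_scaleR_le[OF Y orth A(3)] A(1) by simp
  finally show "a \<le> norm w" .
qed

lemma orth_subspace_norming_linear:
  fixes x :: "'a::real_normed_vector"
  assumes Y: "subspace Y" and orth: "\<forall>u\<in>Y. norm x \<le> norm (x + u)"
  obtains g where "linear g" "\<And>v. g v \<le> norm v" "g x = norm x" "\<And>u. u \<in> Y \<Longrightarrow> g u = 0"
proof -
  let ?M = "{(r *\<^sub>R x + u, r * norm x) | r u. u \<in> Y}"
  obtain g where g: "linear g" "\<And>v. g v \<le> norm v" and ext: "\<And>w a. (w, a) \<in> ?M \<Longrightarrow> g w = a"
    by (rule Hahn_Banach_dominated_extension[OF sublinear_norm
          dominated_linear_graph_orth_subspace[OF Y orth]]) (rule that)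
  show thesis
  proof (rule that[OF g])
    have "(1 *\<^sub>R x + 0, 1 * norm x) \<in> ?M"
      using subspace_0[OF Y] by blast
    then show "g x = norm x"
      using ext by simp
  next
    fix u assume "u \<in> Y"
    then have "(0 *\<^sub>R x + u, 0 * norm x) \<in> ?M"
      by blast
    then show "g u = 0"
      using ext by simp
  qed
qed

lemma linear_le_norm_imp_abs_le:
  fixes g :: "'a::real_normed_vector \<Rightarrow> real"
  assumes "linear g" "\<And>v. g v \<le> norm v"
  shows "\<bar>g v\<bar> \<le> norm v"
  using assms(2)[of v] assms(2)[of "- v"] linear_neg[OF assms(1)] by simp

lemma onorm_eq_1_if_attained:
  fixes G :: "'a::real_normed_vector \<Rightarrow> 'b::real_normed_vector"
  assumes "bounded_linear G" "\<And>v. norm (G v) \<le> norm v" "norm (G x) = norm x" "x \<noteq> 0"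
  shows "onorm G = 1"
proof (rule antisym)
  show "onorm G \<le> 1"
    using assms(2) by (intro onorm_bound) auto
  have "norm x \<le> onorm G * norm x"
    using onorm[OF assms(1), of x] assms(3) by simp
  then show "1 \<le> onorm G"
    using assms(4) by simp
qed

definition norming_functional ::
    "('k::real_normed_field \<Rightarrow> 'a \<Rightarrow> 'a) \<Rightarrow> ('a::real_normed_vector \<Rightarrow> 'k) \<Rightarrow> 'a \<Rightarrow> bool" where
  "norming_functional sm F x \<longleftrightarrow> dual_functional sm F \<and> onorm F = 1 \<and> F x = of_real (norm x)"

lemma smooth_point_norming_functional_unique:
  assumes "smooth_point sm x" "norming_functional sm F x" "norming_functional sm G x"
  shows "F = G"
  using assms unfolding smooth_point_def norming_functional_def by blast

lemma BJ_orth_real_norming_functional: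
  fixes x y :: "'a::real_normed_vector"
  assumes "x \<noteq> 0" and "BJ_orth (scaleR :: real \<Rightarrow> 'a \<Rightarrow> 'a) x y"
  shows "\<exists>G. norming_functional (scaleR :: real \<Rightarrow> 'a \<Rightarrow> 'a) G x \<and> G y = 0"
proof -
  have "\<forall>u\<in>span {y}. norm x \<le> norm (x + u)"
    using assms(2) by (auto simp: BJ_orth_def span_singleton)
  then obtain g where g: "linear g" "\<And>v. g v \<le> norm v" "g x = norm x"
    and vanish: "\<And>u. u \<in> span {y} \<Longrightarrow> g u = 0"
    by (rule orth_subspace_norming_linear[OF subspace_span]) (rule that)
  have bound: "norm (g v) \<le> norm v" for v
    using linear_le_norm_imp_abs_le[OF g(1,2)] by simp
  have bl: "bounded_linear g"
    using g(1) bound by (intro bounded_linear_intro[where K = 1]) (auto simp: linear_add linear_scale)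
  moreover have "onorm g = 1"
    using onorm_eq_1_if_attained[OF bl bound _ assms(1)] g(3) by simp
  ultimately have "norming_functional scaleR g x"
    using g(1,3) by (simp add: norming_functional_def dual_functional_def linear_scale)
  moreover have "g y = 0"
    by (rule vanish) (simp add: span_base)
  ultimately show ?thesis by blast
qed

section \<open>Complex scalars\<close>

lemma
  assumes "complex_scaling cs"
  shows complex_scaling_of_real: "cs (complex_of_real r) v = r *\<^sub>R v"
    and complex_scaling_add_left: "cs (a + b) v = cs a v + cs b v"
    and complex_scaling_add_right: "cs a (v + w) = cs a v + cs a w"
    and complex_scaling_mult: "cs (a * b) v = cs a (cs b v)"
    and complex_scaling_norm: "norm (cs a v) = cmod a * norm v"
  using assms unfolding complex_scaling_def by blast+

lemma complex_scaling_scaleR: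
  assumes "complex_scaling cs"
  shows "cs a (r *\<^sub>R v) = r *\<^sub>R cs a v"
proof -
  have "cs a (r *\<^sub>R v) = cs (a * complex_of_real r) v"
    by (simp only: complex_scaling_of_real[OF assms, symmetric] complex_scaling_mult[OF assms])
  also have "\<dots> = r *\<^sub>R cs a v"
    by (simp only: mult.commute[of a] complex_scaling_mult[OF assms] complex_scaling_of_real[OF assms])
  finally show ?thesis .
qed

lemma complex_scaling_ii:
  assumes "complex_scaling cs"
  shows "cs \<i> (cs \<i> v) = - v"
proof -
  have "cs \<i> (cs \<i> v) = cs (complex_of_real (- 1)) v"
    using complex_scaling_mult[OF assms, of \<i> \<i> v] by simp
  also have "\<dots> = - v"
    using complex_scaling_of_real[OF assms, of "- 1" v] by simp
  finally show ?thesis .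
qed

lemma complex_scaling_Re_Im:
  assumes "complex_scaling cs"
  shows "cs c v = Re c *\<^sub>R v + Im c *\<^sub>R cs \<i> v"
proof -
  have "cs c v = cs (complex_of_real (Re c) + complex_of_real (Im c) * \<i>) v"
    by (rule arg_cong[where f = "\<lambda>d. cs d v"]) (simp add: complex_eq_iff)
  also have "\<dots> = Re c *\<^sub>R v + Im c *\<^sub>R cs \<i> v"
    by (simp only: complex_scaling_add_left[OF assms] complex_scaling_mult[OF assms]
        complex_scaling_of_real[OF assms])
  finally show ?thesis .
qed

lemma subspace_range_complex_scaling:
  assumes "complex_scaling cs"
  shows "subspace (range (\<lambda>c. cs c y))"
  unfolding subspace_def
proof (intro conjI ballI allI)
  have "0 = cs 0 y"
    using complex_scaling_norm[OF assms, of 0 y] by simp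
  then show "0 \<in> range (\<lambda>c. cs c y)"
    by (rule range_eqI)
next
  fix u v assume "u \<in> range (\<lambda>c. cs c y)" "v \<in> range (\<lambda>c. cs c y)"
  then obtain a b where "u = cs a y" "v = cs b y"
    by blast
  then have "u + v = cs (a + b) y"
    by (simp add: complex_scaling_add_left[OF assms])
  then show "u + v \<in> range (\<lambda>c. cs c y)"
    by (rule range_eqI)
next
  fix r u assume "u \<in> range (\<lambda>c. cs c y)"
  then obtain a where "u = cs a y"
    by blast
  then have "r *\<^sub>R u = cs (complex_of_real r * a) y"
    by (simp add: complex_scaling_mult[OF assms] complex_scaling_of_real[OF assms])
  then show "r *\<^sub>R u \<in> range (\<lambda>c. cs c y)"
    by (rule range_eqI)
qed

definition complexification :: "(complex \<Rightarrow> 'a \<Rightarrow> 'a) \<Rightarrow> ('a \<Rightarrow> real) \<Rightarrow> 'a \<Rightarrow> complex" where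
  "complexification cs g v = Complex (g v) (- g (cs \<i> v))"

lemma Re_complexification [simp]: "Re (complexification cs g v) = g v"
  by (simp add: complexification_def)

context
  fixes cs :: "complex \<Rightarrow> 'a::real_normed_vector \<Rightarrow> 'a" and g :: "'a \<Rightarrow> real"
  assumes cs: "complex_scaling cs" and g: "linear g"
begin

lemma complexification_add: "complexification cs g (u + v) = complexification cs g u + complexification cs g v"
  by (simp add: complexification_def complex_scaling_add_right[OF cs] linear_add[OF g] complex_eq_iff)

lemma complexification_scaleR: "complexification cs g (r *\<^sub>R v) = r *\<^sub>R complexification cs g v"
  by (simp add: complexification_def complex_scaling_scaleR[OF cs] linear_scale[OF g] complex_eq_iff)

lemma complexification_complex_scaling:
  "complexification cs g (cs c v) = c * complexification cs g v"
proof -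
  have i: "complexification cs g (cs \<i> v) = \<i> * complexification cs g v"
    by (simp add: complexification_def complex_scaling_ii[OF cs] linear_neg[OF g] complex_eq_iff)
  have "complexification cs g (cs c v) =
      Re c *\<^sub>R complexification cs g v + Im c *\<^sub>R (\<i> * complexification cs g v)"
    by (simp add: complex_scaling_Re_Im[OF cs, of c] complexification_add complexification_scaleR i)
  also have "\<dots> = c * complexification cs g v"
    by (simp add: complex_eq_iff)
  finally show ?thesis .
qed

lemma norm_complexification_le:
  assumes le: "\<And>v. g v \<le> norm v"
  shows "cmod (complexification cs g v) \<le> norm v"
proof (cases "complexification cs g v = 0")
  case False
  define s where "s = cnj (sgn (complexification cs g v))"
  \<comment> \<open>rotating v by the phase s makes the functional real and positive at s v\<close>
  have "s * complexification cs g v = complex_of_real (cmod (complexification cs g v))"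
    unfolding s_def using False
    by (simp add: sgn_div_norm complex_eq_iff power2_eq_square[symmetric] cmod_power2 field_simps)
  then have "complexification cs g (cs s v) = complex_of_real (cmod (complexification cs g v))"
    by (simp add: complexification_complex_scaling)
  then have "cmod (complexification cs g v) = g (cs s v)"
    using Re_complexification[of cs g "cs s v"] by simp
  also have "\<dots> \<le> norm (cs s v)"
    by (rule le)
  also have "\<dots> = norm v"
    unfolding s_def using False by (simp add: complex_scaling_norm[OF cs] norm_sgn)
  finally show ?thesis .
qed simp

end

lemma BJ_orth_complex_norming_functional:
  fixes x y :: "'a::real_normed_vector"
  assumes cs: "complex_scaling cs" and "x \<noteq> 0" and "BJ_orth cs x y"
  shows "\<exists>G. norming_functional cs G x \<and> G y = 0"
proof -
  have "\<forall>u\<in>range (\<lambda>c. cs c y). norm x \<le> norm (x + u)"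
    using assms(3) by (auto simp: BJ_orth_def)
  then obtain g where g: "linear g" "\<And>v. g v \<le> norm v" "g x = norm x"
    and vanish: "\<And>u. u \<in> range (\<lambda>c. cs c y) \<Longrightarrow> g u = 0"
    by (rule orth_subspace_norming_linear[OF subspace_range_complex_scaling[OF cs]]) (rule that)
  define G where "G = complexification cs g"
  have bound: "norm (G v) \<le> norm v" for v
    unfolding G_def using norm_complexification_le[OF cs g(1,2)] by simp
  have bl: "bounded_linear G"
    using bound by (intro bounded_linear_intro[where K = 1])
      (simp_all add: G_def complexification_add[OF cs g(1)] complexification_scaleR[OF cs g(1)])
  have Gx: "G x = complex_of_real (norm x)"
  proof -
    have Re: "Re (G x) = norm x"
      unfolding G_def using g(3) by simp
    have "(Re (G x))\<^sup>2 + (Im (G x))\<^sup>2 = (cmod (G x))\<^sup>2"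
      by (simp add: cmod_power2)
    also have "\<dots> \<le> (norm x)\<^sup>2"
      using bound[of x] by (simp add: power_mono)
    finally have "Im (G x) = 0"
      using Re by simp
    then show ?thesis
      using Re by (simp add: complex_eq_iff)
  qed
  have "norming_functional cs G x"
    using bl Gx onorm_eq_1_if_attained[OF bl bound _ assms(2)]
      complexification_complex_scaling[OF cs g(1)]
    by (simp add: norming_functional_def dual_functional_def G_def)
  moreover have "G y = 0"
  proof -
    have "y = cs 1 y"
      using complex_scaling_of_real[OF cs, of 1 y] by simp
    then have "g y = 0" and "g (cs \<i> y) = 0"
      by (auto intro!: vanish range_eqI)
    then show ?thesis
      by (simp add: G_def complexification_def complex_eq_iff)
  qed
  ultimately show ?thesis by blast
qed

lemma exists_BJ_orth_translate:
  fixes sm :: "'k::{real_normed_field,heine_borel} \<Rightarrow> 'a::real_normed_vector \<Rightarrow> 'a"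
  assumes add: "\<And>a b v. sm (a + b) v = sm a v + sm b v"
    and norm: "\<And>a v. norm (sm a v) = norm a * norm v"
    and "x \<noteq> 0"
  obtains a where "BJ_orth sm (y + sm a x) x"
proof -
  define f where "f a = norm (y + sm a x)" for a
  define R where "R = 2 * norm y / norm x"
  have nx: "0 < norm x"
    using \<open>x \<noteq> 0\<close> by simp
  have "(norm x)-lipschitz_on UNIV f"
  proof (rule lipschitz_onI)
    fix a b :: 'k
    have "sm a x - sm b x = sm (a - b) x"
      using add[of "a - b" b x] by simp
    then have "dist (f a) (f b) \<le> norm (sm (a - b) x)"
      unfolding f_def dist_real_def using norm_triangle_ineq3[of "y + sm a x" "y + sm b x"] by simp
    then show "dist (f a) (f b) \<le> norm x * dist a b"
      by (simp add: norm dist_norm mult.commute)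
  qed (use nx in simp)
  then have "continuous_on (cball 0 R) f"
    using lipschitz_on_continuous_on continuous_on_subset by blast
  moreover have "0 \<le> R"
    unfolding R_def using nx by simp
  ultimately obtain a where "a \<in> cball 0 R" and min_ball: "\<And>b. b \<in> cball 0 R \<Longrightarrow> f a \<le> f b"
    using continuous_attains_inf[OF compact_cball, of 0 R f] by auto
  have min: "f a \<le> f b" for b
  proof (cases "b \<in> cball 0 R")
    case False
    \<comment> \<open>outside the ball, norm y + f b \<ge> norm (sm b x) > 2 norm y\<close>
    then have "2 * norm y < norm b * norm x"
      using nx by (simp add: R_def dist_norm not_le pos_divide_less_eq)
    moreover have "norm (sm b x) \<le> f b + norm y"
      unfolding f_def using norm_triangle_ineq4[of "y + sm b x" y] by simp
    moreover have "f a \<le> f 0"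
      using min_ball \<open>0 \<le> R\<close> by simp
    moreover have "f 0 = norm y"
      using norm[of 0 x] by (simp add: f_def)
    ultimately show ?thesis
      by (simp add: norm)
  qed (rule min_ball)
  show thesis
  proof (rule that[of a], unfold BJ_orth_def, rule allI)
    fix c
    have "norm (y + sm a x) \<le> norm (y + sm (a + c) x)"
      using min[of "a + c"] by (simp add: f_def)
    also have "y + sm (a + c) x = y + sm a x + sm c x"
      by (simp add: add)
    finally show "norm (y + sm a x) \<le> norm (y + sm a x + sm c x)" .
  qed
qed

lemma right_symmetric_smooth_imp_left_symmetric:
  fixes sm :: "'k::{real_normed_field,heine_borel} \<Rightarrow> 'a::real_normed_vector \<Rightarrow> 'a"
  assumes add: "\<And>a b v. sm (a + b) v = sm a v + sm b v"
    and norm: "\<And>a v. norm (sm a v) = norm a * norm v"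
    and James: "\<And>y. BJ_orth sm x y \<Longrightarrow> \<exists>G. norming_functional sm G x \<and> G y = 0"
    and right: "right_symmetric sm x" and smooth: "smooth_point sm x"
  shows "left_symmetric sm x"
  unfolding left_symmetric_def
proof (intro allI impI)
  fix y assume "BJ_orth sm x y"
  then obtain F where F: "norming_functional sm F x" "F y = 0"
    using James by blast
  have "x \<noteq> 0"
    using smooth by (simp add: smooth_point_def)
  then obtain a where wx: "BJ_orth sm (y + sm a x) x"
    by (rule exists_BJ_orth_translate[OF add norm]) (rule that)
  then have "BJ_orth sm x (y + sm a x)"
    using right by (simp add: right_symmetric_def)
  then obtain G where G: "norming_functional sm G x" "G (y + sm a x) = 0"
    using James by blast
  have "G = F"
    using smooth G(1) F(1) by (rule smooth_point_norming_functional_unique)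
  have "linear F" and "\<And>c v. F (sm c v) = c * F v" and "F x = of_real (norm x)"
    using F(1) by (auto simp: norming_functional_def dual_functional_def bounded_linear.linear)
  then have "a * of_real (norm x) = 0"
    using G(2) F(2) \<open>G = F\<close> by (simp add: linear_add)
  then have "a = 0"
    using \<open>x \<noteq> 0\<close> by simp
  moreover have "sm 0 x = 0"
    using norm[of 0 x] by simp
  ultimately show "BJ_orth sm y x"
    using wx by simp
qed

theorem lemma3p16:
  fixes x :: "'a::banach" and z :: "'b::banach" and cs :: "complex \<Rightarrow> 'b \<Rightarrow> 'b"
  shows "(x \<noteq> 0 \<and> right_symmetric (scaleR :: real \<Rightarrow> 'a \<Rightarrow> 'a) x \<and> smooth_point (scaleR :: real \<Rightarrow> 'a \<Rightarrow> 'a) x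
            \<longrightarrow> left_symmetric (scaleR :: real \<Rightarrow> 'a \<Rightarrow> 'a) x)
       \<and> (complex_scaling cs \<and> z \<noteq> 0 \<and> right_symmetric cs z \<and> smooth_point cs z
            \<longrightarrow> left_symmetric cs z)"
proof (intro conjI impI)
  assume "x \<noteq> 0 \<and> right_symmetric (scaleR :: real \<Rightarrow> 'a \<Rightarrow> 'a) x
    \<and> smooth_point (scaleR :: real \<Rightarrow> 'a \<Rightarrow> 'a) x"
  then show "left_symmetric (scaleR :: real \<Rightarrow> 'a \<Rightarrow> 'a) x"
    by (intro right_symmetric_smooth_imp_left_symmetric BJ_orth_real_norming_functional)
      (auto simp: scaleR_left_distrib)
next
  assume "complex_scaling cs \<and> z \<noteq> 0 \<and> right_symmetric cs z \<and> smooth_point cs z"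
  then show "left_symmetric cs z"
    by (intro right_symmetric_smooth_imp_left_symmetric BJ_orth_complex_norming_functional)
      (auto simp: complex_scaling_add_left complex_scaling_norm)
qed

end
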